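(* (i) Let $q,n,s$ be nonnegative integers with $q \ge 3$, $n \ge 1$, $0 \le s \le n-1$ and $s$ even. Then the minimum of $\kappa^*(A_{q,n,s-2b,b})$ over integers $0 \le b \le s/2$ is attained at \[ b = \begin{cases} s/2 & \text{if } s \le \frac{2}{q}(n-1),\\ \left\lfloor \frac{n-1-s}{q-2}\right\rfloor & \text{if } s \ge \frac{2}{q}(n-1).\end{cases} \] (ii) Let $q \ge 3$ and $\delta$ with $\frac{2}{q} \le \delta \le 1$ be fixed, and for each $n$ let $s = s_n$ be an even integer with $0 \le s_n \le n$ and $s_n / n \to \delta$. Then \[ \lim_{n\to\infty} \frac{1}{n}\log \min_{0 \le b \le s_n/2} \kappa^*(A_{q,n,s_n-2b,b}) = (1-\delta)\log(q-1). \]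
   Context: For integers $q \ge 2$, $n \ge 1$, $0 \le a \le n$, $b \ge 0$, the channel $A_{q,n,a,b}$ has input set $[q]^n$ ($[q]=\{0,\dots,q-1\}$) and output set the strings $y \in ([q]\cup\{*\})^n$ with exactly $a$ positions equal to the erasure symbol $*$; $(A_{q,n,a,b})_{x,y}=1$ iff $|\{i : y_i\ne *,\ y_i \ne x_i\}| \le b$ ($a$ erasures and at most $b$ substitutions). For $A \in \{0,1\}^{X\times Y}$, $\kappa^*(A) = \min\{\mathbf{1}^T z : z \in \mathbb{R}^Y,\ z\ge\mathbf{0},\ Az \ge\mathbf{1}\}$. The logarithm is to any fixed base (the same on both sides). *)

theory Defs
  imports "HOL-Analysis.Analysis"
begin

definition kappa_star :: "'x set \<Rightarrow> 'y set \<Rightarrow> ('x \<Rightarrow> 'y \<Rightarrow> bool) \<Rightarrow> real" where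
  "kappa_star X Y A = Inf {(\<Sum>y\<in>Y. z y) | z :: 'y \<Rightarrow> real.
       (\<forall>y\<in>Y. 0 \<le> z y) \<and> (\<forall>x\<in>X. (\<Sum>y\<in>{y\<in>Y. A x y}. z y) \<ge> 1)}"

definition chan_inputs :: "nat \<Rightarrow> nat \<Rightarrow> nat list set" where
  "chan_inputs q n = {x. length x = n \<and> (\<forall>i<n. x ! i < q)}"

text \<open>Output set: words of length n over [q] plus the erasure symbol (None),
  with exactly a erasures.\<close>
definition chan_outputs :: "nat \<Rightarrow> nat \<Rightarrow> nat \<Rightarrow> nat option list set" where
  "chan_outputs q n a = {y. length y = n \<and> (\<forall>i<n. \<forall>v. y ! i = Some v \<longrightarrow> v < q)
        \<and> card {i. i < n \<and> y ! i = None} = a}"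

definition chan_entry :: "nat \<Rightarrow> nat list \<Rightarrow> nat option list \<Rightarrow> bool" where
  "chan_entry b x y = (card {i. i < length y \<and> y ! i \<noteq> None \<and> y ! i \<noteq> Some (x ! i)} \<le> b)"

definition kappaA :: "nat \<Rightarrow> nat \<Rightarrow> nat \<Rightarrow> nat \<Rightarrow> real" where
  "kappaA q n a b = kappa_star (chan_inputs q n) (chan_outputs q n a) (chan_entry b)"

end

theory Submission
  imports Defs "HOL-Real_Asymp.Real_Asymp"
begin

text \<open>Every column of A_{q,n,a,b} has the same weight q^a V, where V is the volume of a Hamming ball
  of radius b in [q]^(n-a); double counting gives kappa* >= q^(n-a) / V, and the uniform weighting of
  the outputs whose erasures are the last a positions attains it. For fixed m = n - s the value
  q^(m+2b) / V_(m+2b)(b) of kappa*(A_{q,n,s-2b,b}) decreases in b as long as (q-2)(b+1) + 1 <= m and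
  increases afterwards, which locates the minimiser. For the rate, the largest term of the binomial
  expansion of q^k = (1 + (q-1))^k pins the minimum between (q-1)^(n-s)/(n+1) and
  (n+1) (q-1)^(n-s) q^D with D = (n-s) - (q-2) s/2, and D = o(n) because delta >= 2/q.\<close>

section \<open>Fractional covering number of a column-regular matrix\<close>

lemma kappa_star_eq_card_div:
  fixes A :: "'x \<Rightarrow> 'y \<Rightarrow> bool"
  assumes fin: "finite X" "finite Y" and Y0: "Y0 \<subseteq> Y"
    and col: "\<And>y. y \<in> Y \<Longrightarrow> card {x\<in>X. A x y} = c"
    and row: "\<And>x. x \<in> X \<Longrightarrow> card {y\<in>Y0. A x y} = d"
    and pos: "c > 0" "d > 0"
    and balance: "card X * d = card Y0 * c"
  shows "kappa_star X Y A = card X / c"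
proof -
  define S where "S = {(\<Sum>y\<in>Y. z y) | z :: 'y \<Rightarrow> real.
       (\<forall>y\<in>Y. 0 \<le> z y) \<and> (\<forall>x\<in>X. (\<Sum>y\<in>{y\<in>Y. A x y}. z y) \<ge> 1)}"
  define z0 where "z0 y = (if y \<in> Y0 then 1 / real d else 0)" for y
  have "(\<Sum>y\<in>Y. z0 y) = card X / c"
  proof -
    have "(\<Sum>y\<in>Y. z0 y) = card Y0 / d"
      unfolding z0_def using fin Y0 by (simp add: sum.If_cases Int_absorb1)
    also have "\<dots> = card X / c"
      using balance pos by (simp add: field_simps flip: of_nat_mult)
    finally show ?thesis .
  qed
  moreover have "(\<Sum>y\<in>{y\<in>Y. A x y}. z0 y) = 1" if "x \<in> X" for x
  proof -
    have "{y\<in>Y. A x y} \<inter> Y0 = {y\<in>Y0. A x y}" using Y0 by blast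
    then show ?thesis
      unfolding z0_def using fin row[OF that] pos by (simp add: sum.If_cases)
  qed
  ultimately have "card X / c \<in> S"
    unfolding S_def by (auto simp: z0_def intro!: exI[of _ z0])
  moreover have "card X / c \<le> t" if "t \<in> S" for t
  proof -
    obtain z where t: "t = (\<Sum>y\<in>Y. z y)" and cover: "\<forall>x\<in>X. (\<Sum>y\<in>{y\<in>Y. A x y}. z y) \<ge> 1"
      using \<open>t \<in> S\<close> unfolding S_def by blast
    have "real (card X) \<le> (\<Sum>x\<in>X. \<Sum>y\<in>{y\<in>Y. A x y}. z y)"
      using sum_mono[of X "\<lambda>_. 1::real"] cover by simp
    also have "\<dots> = (\<Sum>x\<in>X. \<Sum>y\<in>Y. if A x y then z y else 0)"
      using fin by (simp add: sum.inter_filter)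
    also have "\<dots> = (\<Sum>y\<in>Y. \<Sum>x\<in>X. if A x y then z y else 0)"
      by (rule sum.swap)
    also have "\<dots> = (\<Sum>y\<in>Y. real (card {x\<in>X. A x y}) * z y)"
      using fin by (simp add: sum.If_cases Int_def)
    also have "\<dots> = c * t"
      using col unfolding t by (simp add: sum_distrib_left)
    finally show ?thesis using pos by (simp add: field_simps)
  qed
  ultimately have "Inf S = card X / c" by (rule cInf_eq_minimum)
  then show ?thesis unfolding kappa_star_def S_def .
qed

section \<open>Counting in the erasure-substitution channel\<close>

lemma card_less_Suc_filter:
  "card {i. i < Suc n \<and> P i} = (if P 0 then 1 else 0) + card {i. i < n \<and> P (Suc i)}"
proof -
  have "{i. i < Suc n \<and> P i} = (if P 0 then {0} else {}) \<union> Suc ` {i. i < n \<and> P (Suc i)}"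
    by (auto simp: less_Suc_eq_0_disj)
  then show ?thesis
    by (simp add: card_Un_disjoint card_image)
qed

lemma chan_inputs_eq_lists: "chan_inputs q n = {xs. set xs \<subseteq> {..<q} \<and> length xs = n}"
  unfolding chan_inputs_def by (auto simp: subset_iff in_set_conv_nth)

lemma finite_chan_inputs: "finite (chan_inputs q n)"
  unfolding chan_inputs_eq_lists by (rule finite_lists_length_eq) simp

lemma card_chan_inputs: "card (chan_inputs q n) = q ^ n"
  unfolding chan_inputs_eq_lists by (subst card_lists_length_eq) simp_all

lemma card_chan_inputs_Suc_filter:
  "card {x \<in> chan_inputs q (Suc n). P x} = (\<Sum>a<q. card {x \<in> chan_inputs q n. P (a # x)})"
proof -
  have "{x \<in> chan_inputs q (Suc n). P x} = (\<Union>a<q. Cons a ` {x \<in> chan_inputs q n. P (a # x)})"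
    unfolding chan_inputs_eq_lists by (auto simp: length_Suc_conv)
  moreover have "card (\<Union>a<q. Cons a ` {x \<in> chan_inputs q n. P (a # x)}) =
       (\<Sum>a<q. card (Cons a ` {x \<in> chan_inputs q n. P (a # x)}))"
    by (rule card_UN_disjoint) (auto intro: finite_subset[OF _ finite_chan_inputs])
  ultimately show ?thesis
    by (simp add: card_image)
qed

definition hamming_vol :: "nat \<Rightarrow> nat \<Rightarrow> nat \<Rightarrow> nat" where
  "hamming_vol q m b = (\<Sum>j\<le>b. (m choose j) * (q - 1) ^ j)"

lemma hamming_vol_0 [simp]: "hamming_vol q 0 b = 1"
  unfolding hamming_vol_def by (induction b) auto

lemma hamming_vol_radius_0 [simp]: "hamming_vol q m 0 = 1"
  unfolding hamming_vol_def by simp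

lemma hamming_vol_pos: "hamming_vol q m b > 0"
  unfolding hamming_vol_def by (rule sum_pos2[of _ 0]) auto

lemma hamming_vol_Suc_radius:
  "hamming_vol q m (Suc b) = hamming_vol q m b + (m choose Suc b) * (q - 1) ^ Suc b"
  unfolding hamming_vol_def by simp

lemma hamming_vol_Suc_Suc:
  "hamming_vol q (Suc m) (Suc b) = hamming_vol q m (Suc b) + (q - 1) * hamming_vol q m b"
proof -
  define r where "r = q - 1"
  have "(\<Sum>j\<le>Suc b. (Suc m choose j) * r ^ j) = 1 + (\<Sum>j\<le>b. (Suc m choose Suc j) * r ^ Suc j)"
    by (subst sum.atMost_Suc_shift) simp
  also have "\<dots> = 1 + (\<Sum>j\<le>b. (m choose Suc j) * r ^ Suc j) + r * (\<Sum>j\<le>b. (m choose j) * r ^ j)"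
    by (simp add: sum.distrib sum_distrib_left algebra_simps)
  also have "1 + (\<Sum>j\<le>b. (m choose Suc j) * r ^ Suc j) = (\<Sum>j\<le>Suc b. (m choose j) * r ^ j)"
    by (subst sum.atMost_Suc_shift) simp
  finally show ?thesis
    unfolding hamming_vol_def r_def .
qed

definition substitutions :: "nat list \<Rightarrow> nat option list \<Rightarrow> nat" where
  "substitutions x y = card {i. i < length y \<and> y ! i \<noteq> None \<and> y ! i \<noteq> Some (x ! i)}"

definition erasures :: "nat option list \<Rightarrow> nat" where
  "erasures y = card {i. i < length y \<and> y ! i = None}"

lemma substitutions_Cons:
  "substitutions (a # x) (c # y) = (if c \<noteq> None \<and> c \<noteq> Some a then 1 else 0) + substitutions x y"
  unfolding substitutions_def by (simp add: card_less_Suc_filter)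

lemma erasures_Cons: "erasures (c # y) = (if c = None then 1 else 0) + erasures y"
  unfolding erasures_def by (simp add: card_less_Suc_filter)

lemma erasures_le_length: "erasures y \<le> length y"
proof -
  have "erasures y \<le> card {..<length y}"
    unfolding erasures_def by (rule card_mono) auto
  then show ?thesis by simp
qed

lemma card_substitutions_le:
  assumes "\<forall>i<length y. \<forall>v. y ! i = Some v \<longrightarrow> v < q"
  shows "card {x \<in> chan_inputs q (length y). substitutions x y \<le> b}
           = q ^ erasures y * hamming_vol q (length y - erasures y) b"
  using assms
proof (induction y arbitrary: b)
  case Nil
  have "chan_inputs q 0 = {[]}" unfolding chan_inputs_def by auto
  then show ?case by (simp add: substitutions_def erasures_def)
next
  case (Cons c y)
  have IH: "card {x \<in> chan_inputs q (length y). substitutions x y \<le> b}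
              = q ^ erasures y * hamming_vol q (length y - erasures y) b" for b
    using Cons.IH Cons.prems by (metis Suc_mono length_Cons nth_Cons_Suc)
  have split: "card {x \<in> chan_inputs q (length (c # y)). substitutions x (c # y) \<le> b} =
        (\<Sum>a<q. card {x \<in> chan_inputs q (length y).
                    (if c \<noteq> None \<and> c \<noteq> Some a then 1 else 0) + substitutions x y \<le> b})"
    by (simp add: card_chan_inputs_Suc_filter substitutions_Cons)
  show ?case
  proof (cases c)
    case None
    then show ?thesis using IH split by (simp add: erasures_Cons)
  next
    case (Some v)
    have "v < q" using Cons.prems Some by force
    \<comment> \<open>the symbol v costs nothing, each of the other q - 1 symbols one substitution\<close>
    have "card {x \<in> chan_inputs q (length (c # y)). substitutions x (c # y) \<le> b}
        = (\<Sum>a<q. if a = v then q ^ erasures y * hamming_vol q (length y - erasures y) b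
                   else if b = 0 then 0 else q ^ erasures y * hamming_vol q (length y - erasures y) (b - 1))"
      unfolding split using Some IH
      by (intro sum.cong refl) (auto simp: gr0_conv_Suc)
    also have "\<dots> = q ^ erasures y * hamming_vol q (Suc (length y - erasures y)) b"
      using \<open>v < q\<close>
      by (cases b) (auto simp: sum.delta_remove hamming_vol_Suc_Suc algebra_simps)
    finally show ?thesis
      using Some erasures_le_length[of y] by (simp add: erasures_Cons Suc_diff_le)
  qed
qed

lemma chan_entry_iff: "chan_entry b x y \<longleftrightarrow> substitutions x y \<le> b"
  unfolding chan_entry_def substitutions_def ..

lemma finite_chan_outputs: "finite (chan_outputs q n a)"
proof -
  have "chan_outputs q n a \<subseteq> {ys. set ys \<subseteq> insert None (Some ` {..<q}) \<and> length ys = n}"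
  proof
    fix y assume y: "y \<in> chan_outputs q n a"
    have "c \<in> insert None (Some ` {..<q})" if "c \<in> set y" for c
      using y that unfolding chan_outputs_def by (cases c) (auto simp: in_set_conv_nth)
    then show "y \<in> {ys. set ys \<subseteq> insert None (Some ` {..<q}) \<and> length ys = n}"
      using y unfolding chan_outputs_def by auto
  qed
  then show ?thesis
    by (rule finite_subset) (intro finite_lists_length_eq, simp)
qed

lemma card_chan_entry_column:
  assumes "y \<in> chan_outputs q n a"
  shows "card {x \<in> chan_inputs q n. chan_entry b x y} = q ^ a * hamming_vol q (n - a) b"
  using assms card_substitutions_le[of y q b]
  unfolding chan_outputs_def erasures_def chan_entry_iff by auto

definition erase_tail :: "nat \<Rightarrow> nat list \<Rightarrow> nat option list" where
  "erase_tail a w = map Some w @ replicate a None"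

lemma erase_tail_in_chan_outputs:
  assumes "w \<in> chan_inputs q (n - a)" "a \<le> n"
  shows "erase_tail a w \<in> chan_outputs q n a"
proof -
  have "{i. i < n \<and> erase_tail a w ! i = None} = {n - a..<n}"
    using assms by (auto simp: chan_inputs_def erase_tail_def nth_append)
  then show ?thesis
    using assms unfolding chan_outputs_def chan_inputs_def erase_tail_def
    by (auto simp: nth_append split: if_splits)
qed

lemma nth_erase_tail:
  "i < length w + a \<Longrightarrow> erase_tail a w ! i = (if i < length w then Some (w ! i) else None)"
  by (simp add: erase_tail_def nth_append)

lemma inj_erase_tail: "inj (erase_tail a)"
  unfolding erase_tail_def by (rule injI) (simp add: inj_map_eq_map)

lemma substitutions_erase_tail:
  assumes "length w = n - a" "length x = n" "a \<le> n"
  shows "substitutions x (erase_tail a w) = substitutions w (map Some (take (n - a) x))"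
proof -
  have iff: "erase_tail a w ! i \<noteq> None \<and> erase_tail a w ! i \<noteq> Some (x ! i) \<longleftrightarrow>
      i < n - a \<and> w ! i \<noteq> x ! i" if "i < n" for i
    using that assms by (simp add: nth_erase_tail)
  have "{i. i < n \<and> erase_tail a w ! i \<noteq> None \<and> erase_tail a w ! i \<noteq> Some (x ! i)}
      = {i. i < n \<and> i < n - a \<and> w ! i \<noteq> x ! i}"
    using iff by blast
  also have "\<dots> = {i. i < n - a \<and> w ! i \<noteq> x ! i}"
    by auto
  finally have "{i. i < n \<and> erase_tail a w ! i \<noteq> None \<and> erase_tail a w ! i \<noteq> Some (x ! i)}
      = {i. i < n - a \<and> w ! i \<noteq> x ! i}" .
  moreover have "{i. i < n - a \<and> map Some (take (n - a) x) ! i \<noteq> None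
      \<and> map Some (take (n - a) x) ! i \<noteq> Some (w ! i)} = {i. i < n - a \<and> w ! i \<noteq> x ! i}"
    using assms by auto
  ultimately show ?thesis
    unfolding substitutions_def using assms by (simp add: erase_tail_def)
qed

lemma card_chan_entry_erase_tail_row:
  assumes "x \<in> chan_inputs q n" "a \<le> n"
  shows "card {y \<in> erase_tail a ` chan_inputs q (n - a). chan_entry b x y} = hamming_vol q (n - a) b"
proof -
  define u where "u = map Some (take (n - a) x)"
  have x: "length x = n" "\<forall>i<n. x ! i < q"
    using assms unfolding chan_inputs_def by auto
  have u: "length u = n - a" "erasures u = 0" "\<forall>i<length u. \<forall>v. u ! i = Some v \<longrightarrow> v < q"
    using x assms(2) unfolding u_def erasures_def by auto
  have "{y \<in> erase_tail a ` chan_inputs q (n - a). chan_entry b x y}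
      = erase_tail a ` {w \<in> chan_inputs q (n - a). substitutions w u \<le> b}"
    using substitutions_erase_tail[OF _ x(1) assms(2)]
    unfolding u_def chan_entry_iff by (auto simp: chan_inputs_def)
  then show ?thesis
    using card_substitutions_le[OF u(3), of b] u(1,2)
    by (simp add: card_image[OF inj_on_subset[OF inj_erase_tail subset_UNIV]])
qed

definition covering_ratio :: "nat \<Rightarrow> nat \<Rightarrow> nat \<Rightarrow> real" where
  "covering_ratio q k b = q ^ k / hamming_vol q k b"

theorem kappaA_eq_covering_ratio:
  assumes "a \<le> n" "q > 0"
  shows "kappaA q n a b = covering_ratio q (n - a) b"
proof -
  let ?V = "hamming_vol q (n - a) b"
  let ?Y0 = "erase_tail a ` chan_inputs q (n - a)"
  have "card ?Y0 = q ^ (n - a)"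
    by (simp add: card_image card_chan_inputs inj_on_subset[OF inj_erase_tail])
  then have balance: "card (chan_inputs q n) * ?V = card ?Y0 * (q ^ a * ?V)"
    using assms by (simp add: card_chan_inputs flip: power_add)
  have "kappaA q n a b = card (chan_inputs q n) / (q ^ a * ?V)"
    unfolding kappaA_def
  proof (rule kappa_star_eq_card_div[OF finite_chan_inputs finite_chan_outputs _ _ _ _ _ balance])
    show "?Y0 \<subseteq> chan_outputs q n a"
      using assms(1) by (auto intro: erase_tail_in_chan_outputs)
  qed (use assms hamming_vol_pos in \<open>simp_all add: card_chan_entry_column card_chan_entry_erase_tail_row\<close>)
  also have "\<dots> = covering_ratio q (n - a) b"
  proof -
    have "real q ^ n = real q ^ (n - a) * real q ^ a"
      using assms(1) by (simp flip: power_add)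
    then show ?thesis
      using assms(2) by (simp add: card_chan_inputs covering_ratio_def)
  qed
  finally show ?thesis .
qed

lemma kappaA_trade_eq:
  assumes "2 * b \<le> s" "s \<le> n" "q > 0"
  shows "kappaA q n (s - 2 * b) b = covering_ratio q (n - s + 2 * b) b"
  using kappaA_eq_covering_ratio[of "s - 2 * b" n q b] assms
  by (simp add: Suc_diff_le diff_diff_right)

section \<open>Trading two erasures for one substitution\<close>

lemma hamming_vol_Suc_Suc_real:
  assumes "q > 0"
  shows "real (hamming_vol q (Suc k) (Suc b))
           = q * hamming_vol q k b + (k choose Suc b) * (real q - 1) ^ Suc b"
proof -
  have "real (hamming_vol q (Suc k) (Suc b)) = real (hamming_vol q k b)
      + (k choose Suc b) * real (q - 1) ^ Suc b + real (q - 1) * hamming_vol q k b"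
    using hamming_vol_Suc_Suc[of q k b] hamming_vol_Suc_radius[of q k b] by simp
  then show ?thesis
    using assms by (simp add: of_nat_diff algebra_simps)
qed

lemma hamming_vol_Suc_real:
  assumes "q > 0"
  shows "real (hamming_vol q (Suc k) b) = q * hamming_vol q k b - (k choose b) * (real q - 1) ^ Suc b"
proof (cases b)
  case (Suc c)
  define t where "t = (k choose Suc c) * (real q - 1) ^ Suc c"
  have "real (hamming_vol q k (Suc c)) = hamming_vol q k c + t"
    unfolding hamming_vol_Suc_radius t_def using assms by (simp add: of_nat_diff)
  moreover have "(k choose Suc c) * (real q - 1) ^ Suc (Suc c) = (real q - 1) * t"
    unfolding t_def by (simp add: algebra_simps)
  ultimately show ?thesis
    unfolding Suc hamming_vol_Suc_Suc_real[OF assms] t_def[symmetric] by (simp add: algebra_simps)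
qed simp

lemma hamming_vol_add2_Suc_identity:
  assumes "q > 0"
  shows "real (Suc b) * (hamming_vol q (k + 2) (Suc b) - (real q)\<^sup>2 * hamming_vol q k b)
       = (real q - 1) ^ Suc b * (k choose b) * ((real k - b) - (real q - 1) * Suc b)"
proof -
  have absorb: "real (Suc b) * (k choose Suc b) = (real k - b) * (k choose b)"
  proof (cases "b \<le> k")
    case True
    then show ?thesis
      using binomial_absorb_comp[of k b] binomial_absorption[of b k] by (metis of_nat_diff of_nat_mult)
  qed (simp add: binomial_eq_0)
  have "real (hamming_vol q (k + 2) (Suc b))
      = real (hamming_vol q (Suc k) (Suc b)) + (real q - 1) * hamming_vol q (Suc k) b"
    using hamming_vol_Suc_Suc[of q "Suc k" b] assms by (simp add: of_nat_diff)
  also have "\<dots> = (real q)\<^sup>2 * hamming_vol q k b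
      + (k choose Suc b) * (real q - 1) ^ Suc b - (real q - 1) * ((k choose b) * (real q - 1) ^ Suc b)"
    unfolding hamming_vol_Suc_Suc_real[OF assms, of k b] hamming_vol_Suc_real[OF assms, of k b]
    by (simp add: algebra_simps power2_eq_square)
  finally have diff: "real (hamming_vol q (k + 2) (Suc b)) - (real q)\<^sup>2 * hamming_vol q k b
      = (k choose Suc b) * (real q - 1) ^ Suc b - (real q - 1) * ((k choose b) * (real q - 1) ^ Suc b)"
    by simp
  have "real (Suc b) * (hamming_vol q (k + 2) (Suc b) - (real q)\<^sup>2 * hamming_vol q k b)
      = (real (Suc b) * (k choose Suc b)) * (real q - 1) ^ Suc b
        - real (Suc b) * (real q - 1) * (k choose b) * (real q - 1) ^ Suc b"
    unfolding diff by (simp add: algebra_simps)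
  also have "\<dots> = (real q - 1) ^ Suc b * (k choose b) * ((real k - b) - (real q - 1) * Suc b)"
    unfolding absorb by (simp add: algebra_simps)
  finally show ?thesis .
qed

lemma covering_ratio_add2_Suc_le_iff:
  assumes "q > 0"
  shows "covering_ratio q (k + 2) (Suc b) \<le> covering_ratio q k b
           \<longleftrightarrow> (real q)\<^sup>2 * hamming_vol q k b \<le> hamming_vol q (k + 2) (Suc b)"
  using assms hamming_vol_pos[of q k b] hamming_vol_pos[of q "k + 2" "Suc b"]
  by (simp add: covering_ratio_def divide_simps power_add power2_eq_square mult.assoc)

lemma covering_ratio_add2_Suc_ge_iff:
  assumes "q > 0"
  shows "covering_ratio q k b \<le> covering_ratio q (k + 2) (Suc b)
           \<longleftrightarrow> hamming_vol q (k + 2) (Suc b) \<le> (real q)\<^sup>2 * hamming_vol q k b"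
  using assms hamming_vol_pos[of q k b] hamming_vol_pos[of q "k + 2" "Suc b"]
  by (simp add: covering_ratio_def divide_simps power_add power2_eq_square mult.assoc)

lemma covering_ratio_step_le:
  assumes "q \<ge> 3" "(q - 2) * Suc b + 1 \<le> m"
  shows "covering_ratio q (m + 2 * Suc b) (Suc b) \<le> covering_ratio q (m + 2 * b) b"
proof -
  have q2: "real (q - 2) = real q - 2"
    using assms(1) by (simp add: of_nat_diff)
  have "real ((q - 2) * Suc b + 1) = (real q - 2) * Suc b + 1"
    unfolding of_nat_add of_nat_mult q2 by simp
  moreover have "real ((q - 2) * Suc b + 1) \<le> m"
    using assms(2) by (simp only: of_nat_le_iff)
  ultimately have "(real q - 2) * Suc b + 1 \<le> m"
    by simp
  then have "0 \<le> (real (m + 2 * b) - b) - (real q - 1) * Suc b"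
    by (simp add: algebra_simps)
  then have "0 \<le> (real q - 1) ^ Suc b * (m + 2 * b choose b) * ((real (m + 2 * b) - b) - (real q - 1) * Suc b)"
    using assms(1) by simp
  then have "0 \<le> real (Suc b) * (hamming_vol q (m + 2 * b + 2) (Suc b) - (real q)\<^sup>2 * hamming_vol q (m + 2 * b) b)"
    using assms(1) hamming_vol_add2_Suc_identity[of q b "m + 2 * b"] by simp
  then show ?thesis
    using assms(1) covering_ratio_add2_Suc_le_iff[of q "m + 2 * b" b] by (simp add: zero_le_mult_iff)
qed

lemma covering_ratio_step_ge:
  assumes "q \<ge> 3" "m \<le> (q - 2) * Suc b + 1"
  shows "covering_ratio q (m + 2 * b) b \<le> covering_ratio q (m + 2 * Suc b) (Suc b)"
proof -
  have q2: "real (q - 2) = real q - 2"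
    using assms(1) by (simp add: of_nat_diff)
  have "real ((q - 2) * Suc b + 1) = (real q - 2) * Suc b + 1"
    unfolding of_nat_add of_nat_mult q2 by simp
  moreover have "real m \<le> real ((q - 2) * Suc b + 1)"
    using assms(2) by (simp only: of_nat_le_iff)
  ultimately have "m \<le> (real q - 2) * Suc b + 1"
    by simp
  then have "(real (m + 2 * b) - b) - (real q - 1) * Suc b \<le> 0"
    by (simp add: algebra_simps)
  then have "(real q - 1) ^ Suc b * (m + 2 * b choose b) * ((real (m + 2 * b) - b) - (real q - 1) * Suc b) \<le> 0"
    using assms(1) by (simp add: mult_nonneg_nonpos)
  then have "real (Suc b) * (hamming_vol q (m + 2 * b + 2) (Suc b) - (real q)\<^sup>2 * hamming_vol q (m + 2 * b) b) \<le> 0"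
    using assms(1) hamming_vol_add2_Suc_identity[of q b "m + 2 * b"] by simp
  then show ?thesis
    using assms(1) covering_ratio_add2_Suc_ge_iff[of q "m + 2 * b" b] by (simp add: mult_le_0_iff)
qed

lemma valley_le:
  fixes f :: "nat \<Rightarrow> 'a::order"
  assumes "\<And>j. j < B \<Longrightarrow> f (Suc j) \<le> f j" "\<And>j. B \<le> j \<Longrightarrow> j < T \<Longrightarrow> f j \<le> f (Suc j)" "b \<le> T"
  shows "f B \<le> f b"
proof (cases "b \<le> B")
  case True
  show ?thesis
    by (rule lift_Suc_antimono_le_ivl[of "{..<B}" f b B, OF _ True]) (auto intro: assms(1))
next
  case False
  then show ?thesis
    using lift_Suc_mono_le_ivl[of "{B..<T}" f B b] assms(2,3) by auto
qed

lemma peak_le: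
  fixes f :: "nat \<Rightarrow> 'a::order"
  assumes "\<And>j. j < B \<Longrightarrow> f j \<le> f (Suc j)" "\<And>j. B \<le> j \<Longrightarrow> j < T \<Longrightarrow> f (Suc j) \<le> f j" "b \<le> T"
  shows "f b \<le> f B"
proof (cases "b \<le> B")
  case True
  show ?thesis
    by (rule lift_Suc_mono_le_ivl[of "{..<B}" f b B, OF _ True]) (auto intro: assms(1))
next
  case False
  then show ?thesis
    using lift_Suc_antimono_le_ivl[of "{B..<T}" f B b] assms(2,3) by auto
qed

lemma kappaA_min_at_half:
  fixes q n s :: nat
  assumes "q \<ge> 3" "s \<le> n - 1" "even s" "q * s \<le> 2 * (n - 1)" "b \<le> s div 2"
  shows "kappaA q n (s - 2 * (s div 2)) (s div 2) \<le> kappaA q n (s - 2 * b) b"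
proof -
  obtain t where s: "s = 2 * t"
    using assms(3) by blast
  have "covering_ratio q (n - s + 2 * t) t \<le> covering_ratio q (n - s + 2 * b) b"
  proof (rule valley_le[where f = "\<lambda>b. covering_ratio q (n - s + 2 * b) b"])
    fix j assume "j < t"
    then have "(q - 2) * Suc j \<le> (q - 2) * t"
      by (intro mult_le_mono2) simp
    moreover have "q * s = 2 * ((q - 2) * t) + 2 * s"
      using assms(1) s by (simp add: algebra_simps flip: add_mult_distrib2)
    moreover have "0 < (q - 2) * Suc j"
      using assms(1) by simp
    ultimately have "(q - 2) * Suc j + 1 \<le> n - s"
      using assms(2,4) by linarith
    then show "covering_ratio q (n - s + 2 * Suc j) (Suc j) \<le> covering_ratio q (n - s + 2 * j) j"
      by (rule covering_ratio_step_le[OF assms(1)])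
  qed (use assms(5) s in auto)
  moreover have "2 * t \<le> s" "2 * b \<le> s" "s \<le> n"
    using assms(2,5) s by auto
  ultimately show ?thesis
    using assms(1) s kappaA_trade_eq[of t s n q] kappaA_trade_eq[of b s n q] by simp
qed

lemma threshold_div_le_half:
  fixes q n s :: nat
  assumes "q \<ge> 3" "s \<le> n - 1" "even s" "2 * (n - 1) \<le> q * s"
  shows "(n - 1 - s) div (q - 2) \<le> s div 2"
proof -
  obtain t where s: "s = 2 * t"
    using assms(3) by blast
  have "q * s = 2 * ((q - 2) * t) + 2 * s"
    using assms(1) s by (simp add: algebra_simps flip: add_mult_distrib2)
  then have "(q - 2) * ((n - 1 - s) div (q - 2)) \<le> (q - 2) * t"
    using times_div_less_eq_dividend[of "q - 2" "n - 1 - s"] assms(4) by linarith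
  then show ?thesis
    using assms(1) s by simp
qed

lemma kappaA_min_at_floor:
  fixes q n s :: nat
  assumes "q \<ge> 3" "s \<le> n - 1" "even s" "2 * (n - 1) \<le> q * s" "b \<le> s div 2"
  defines "B \<equiv> (n - 1 - s) div (q - 2)"
  shows "kappaA q n (s - 2 * B) B \<le> kappaA q n (s - 2 * b) b"
proof -
  have below: "(q - 2) * B \<le> n - 1 - s"
    unfolding B_def by (rule times_div_less_eq_dividend)
  have above: "n - 1 - s < (q - 2) * Suc B"
    using dividend_less_times_div[of "q - 2" "n - 1 - s"] assms(1) unfolding B_def by simp
  have "covering_ratio q (n - s + 2 * B) B \<le> covering_ratio q (n - s + 2 * b) b"
  proof (rule valley_le[where f = "\<lambda>b. covering_ratio q (n - s + 2 * b) b"])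
    fix j assume "j < B"
    then have "(q - 2) * Suc j \<le> (q - 2) * B"
      by (intro mult_le_mono2) simp
    moreover have "0 < (q - 2) * Suc j"
      using assms(1) by simp
    ultimately have "(q - 2) * Suc j + 1 \<le> n - s"
      using below assms(2) by linarith
    then show "covering_ratio q (n - s + 2 * Suc j) (Suc j) \<le> covering_ratio q (n - s + 2 * j) j"
      by (rule covering_ratio_step_le[OF assms(1)])
  next
    fix j assume "B \<le> j"
    then have "(q - 2) * Suc B \<le> (q - 2) * Suc j"
      by (intro mult_le_mono2) simp
    then have "n - s \<le> (q - 2) * Suc j + 1"
      using above by linarith
    then show "covering_ratio q (n - s + 2 * j) j \<le> covering_ratio q (n - s + 2 * Suc j) (Suc j)"
      by (rule covering_ratio_step_ge[OF assms(1)])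
  qed (rule assms(5))
  moreover have "B \<le> s div 2"
    unfolding B_def using assms(1-4) by (rule threshold_div_le_half)
  ultimately show ?thesis
    using assms(1-3,5) by (auto simp: kappaA_trade_eq)
qed

section \<open>Growth rate of the minimum\<close>

lemma binomial_term_le_power:
  assumes "j \<le> k"
  shows "(k choose j) * r ^ (k - j) \<le> (Suc r) ^ k"
proof -
  have "(k choose j) * r ^ (k - j) \<le> (\<Sum>i\<le>k. (k choose i) * r ^ (k - i))"
    using assms by (intro member_le_sum) auto
  also have "\<dots> = (Suc r) ^ k"
    using binomial_ring[of 1 r k] by simp
  finally show ?thesis .
qed

lemma covering_ratio_lower:
  assumes "q \<ge> 2"
  shows "(real q - 1) ^ m / real (b + 1) \<le> covering_ratio q (m + 2 * b) b"
proof -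
  define k where "k = m + 2 * b"
  have "(q - 1) ^ m * ((k choose j) * (q - 1) ^ j) \<le> q ^ k" if "j \<le> b" for j
  proof -
    have "(q - 1) ^ m * ((k choose j) * (q - 1) ^ j) = (k choose j) * (q - 1) ^ (m + j)"
      by (simp add: power_add algebra_simps)
    also have "\<dots> \<le> (k choose j) * (q - 1) ^ (k - j)"
      using that assms unfolding k_def by (intro mult_le_mono2 power_increasing) auto
    also have "\<dots> \<le> q ^ k"
      using binomial_term_le_power[of j k "q - 1"] that assms unfolding k_def by simp
    finally show ?thesis .
  qed
  then have "(q - 1) ^ m * hamming_vol q k b \<le> (b + 1) * q ^ k"
    unfolding hamming_vol_def sum_distrib_left
    using sum_mono[of "{..b}" _ "\<lambda>_. q ^ k"] by simp
  then have "real ((q - 1) ^ m * hamming_vol q k b) \<le> real ((b + 1) * q ^ k)"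
    by (simp only: of_nat_le_iff)
  then have "(real q - 1) ^ m * hamming_vol q k b \<le> (b + 1) * real q ^ k"
    using assms by (simp add: of_nat_diff algebra_simps)
  then show ?thesis
    using hamming_vol_pos[of q k b] unfolding covering_ratio_def k_def[symmetric]
    by (simp add: divide_simps algebra_simps)
qed

lemma binomial_term_ratio:
  assumes "j < k"
  shows "(k choose Suc j) * r ^ (k - Suc j) * (Suc j * r) = (k choose j) * r ^ (k - j) * (k - j)"
proof -
  have "r ^ (k - j) = r ^ (k - Suc j) * r"
    using assms by (metis Suc_diff_Suc power_Suc2)
  moreover have "Suc j * (k choose Suc j) = (k - j) * (k choose j)"
    using binomial_absorption[of j k] binomial_absorb_comp[of k j] by simp
  ultimately show ?thesis
    by (metis mult.assoc mult.commute mult.left_commute)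
qed

lemma binomial_term_peak:
  assumes "q \<ge> 3" "(q - 2) * b \<le> m + 1" "m \<le> (q - 2) * Suc b + 1" "j \<le> m + 2 * b"
  shows "(m + 2 * b choose j) * (q - 1) ^ (m + 2 * b - j) \<le> (m + 2 * b choose b) * (q - 1) ^ (m + b)"
proof -
  define k where "k = m + 2 * b"
  define f where "f j = (k choose j) * (q - 1) ^ (k - j)" for j
  have "q - 1 = (q - 2) + 1"
    using assms(1) by simp
  then have q1: "Suc j * (q - 1) = (q - 2) * Suc j + Suc j" for j
    by (simp add: algebra_simps)
  have "f j \<le> f b"
  proof (rule peak_le[of b f k])
    fix j assume "j < b"
    then have "(q - 2) * Suc j \<le> (q - 2) * b"
      by (intro mult_le_mono2) simp
    then have "Suc j * (q - 1) \<le> k - j"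
      using q1[of j] assms(2) \<open>j < b\<close> unfolding k_def by linarith
    then have "f (Suc j) * (Suc j * (q - 1)) \<le> f (Suc j) * (k - j)"
      by (rule mult_le_mono2)
    moreover have "f (Suc j) * (Suc j * (q - 1)) = f j * (k - j)"
      using binomial_term_ratio[of j k "q - 1"] \<open>j < b\<close> unfolding f_def k_def by simp
    moreover have "0 < k - j"
      using \<open>j < b\<close> unfolding k_def by simp
    ultimately show "f j \<le> f (Suc j)"
      using mult_le_cancel2 by metis
  next
    fix j assume "b \<le> j" "j < k"
    then have "(q - 2) * Suc b \<le> (q - 2) * Suc j"
      by (intro mult_le_mono2) simp
    then have "k - j \<le> Suc j * (q - 1)"
      using q1[of j] assms(3) \<open>b \<le> j\<close> unfolding k_def by linarith
    then have "f j * (k - j) \<le> f j * (Suc j * (q - 1))"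
      by (rule mult_le_mono2)
    moreover have "f (Suc j) * (Suc j * (q - 1)) = f j * (k - j)"
      using binomial_term_ratio[of j k "q - 1"] \<open>j < k\<close> unfolding f_def by simp
    moreover have "0 < Suc j * (q - 1)"
      using assms(1) by simp
    ultimately show "f (Suc j) \<le> f j"
      using mult_le_cancel2 by metis
  qed (use assms(4) k_def in simp)
  then show ?thesis
    unfolding f_def k_def by (simp add: diff_add_inverse2 mult_2)
qed

lemma covering_ratio_upper:
  assumes "q \<ge> 3" "(q - 2) * b \<le> m + 1" "m \<le> (q - 2) * Suc b + 1"
  shows "covering_ratio q (m + 2 * b) b \<le> real (m + 2 * b + 1) * (real q - 1) ^ m"
proof -
  define k where "k = m + 2 * b"
  have "q ^ k = (\<Sum>j\<le>k. (k choose j) * (q - 1) ^ (k - j))"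
    using binomial_ring[of 1 "q - 1" k] assms(1) by simp
  also have "\<dots> \<le> (\<Sum>j\<le>k. (k choose b) * (q - 1) ^ (m + b))"
    using binomial_term_peak[OF assms] unfolding k_def by (intro sum_mono) simp
  also have "\<dots> = (k + 1) * ((q - 1) ^ m * ((k choose b) * (q - 1) ^ b))"
    by (simp add: power_add algebra_simps)
  also have "\<dots> \<le> (k + 1) * ((q - 1) ^ m * hamming_vol q k b)"
    unfolding hamming_vol_def by (intro mult_le_mono2 member_le_sum) auto
  finally have "real (q ^ k) \<le> real ((k + 1) * ((q - 1) ^ m * hamming_vol q k b))"
    by (simp only: of_nat_le_iff)
  then have "real q ^ k \<le> (k + 1) * ((real q - 1) ^ m * hamming_vol q k b)"
    using assms(1) by (simp add: of_nat_diff algebra_simps)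
  then show ?thesis
    using hamming_vol_pos[of q k b] unfolding covering_ratio_def k_def[symmetric]
    by (simp add: divide_simps algebra_simps)
qed

lemma hamming_vol_le_Suc_length: "hamming_vol q k b \<le> hamming_vol q (Suc k) b"
proof -
  have "k choose j \<le> Suc k choose j" for j
    by (cases j) auto
  then show ?thesis
    unfolding hamming_vol_def by (intro sum_mono mult_le_mono1)
qed

lemma covering_ratio_add_le:
  assumes "q > 0"
  shows "covering_ratio q (k + d) b \<le> real q ^ d * covering_ratio q k b"
proof (induction d)
  case (Suc d)
  have "covering_ratio q (Suc (k + d)) b \<le> q * covering_ratio q (k + d) b"
    using hamming_vol_le_Suc_length[of q "k + d" b] hamming_vol_pos[of q "k + d" b]
    unfolding covering_ratio_def by (simp add: frac_le)
  also have "\<dots> \<le> q * (real q ^ d * covering_ratio q k b)"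
    using Suc by (intro mult_left_mono) auto
  finally show ?case
    by simp
qed simp

lemma kappaA_trade_image:
  assumes "s \<le> n" "q > 0"
  shows "(\<lambda>b. kappaA q n (s - 2 * b) b) ` {0..s div 2}
           = (\<lambda>b. covering_ratio q (n - s + 2 * b) b) ` {0..s div 2}"
  using assms by (intro image_cong refl) (simp add: kappaA_trade_eq)

lemma Min_kappaA_le_covering_ratio:
  assumes "q > 0" "s \<le> n" "b \<le> s div 2"
  shows "Min ((\<lambda>b. kappaA q n (s - 2 * b) b) ` {0..s div 2}) \<le> covering_ratio q (n - s + 2 * b) b"
proof -
  have "covering_ratio q (n - s + 2 * b) b \<in> (\<lambda>b. covering_ratio q (n - s + 2 * b) b) ` {0..s div 2}"
    using assms(3) by simp
  then show ?thesis
    using assms(1,2) kappaA_trade_image[of s n q] by simp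
qed

lemma Min_kappaA_ge:
  fixes q n s :: nat
  assumes "q \<ge> 3" "s \<le> n"
  shows "(real q - 1) ^ (n - s) / real (n + 1) \<le> Min ((\<lambda>b. kappaA q n (s - 2 * b) b) ` {0..s div 2})"
proof -
  let ?C = "(\<lambda>b. covering_ratio q (n - s + 2 * b) b) ` {0..s div 2}"
  have "Min ?C \<in> ?C"
    by (rule Min_in) auto
  then obtain b where b: "b \<in> {0..s div 2}" and Min: "Min ?C = covering_ratio q (n - s + 2 * b) b"
    by (rule imageE)
  have "(real q - 1) ^ (n - s) / real (n + 1) \<le> (real q - 1) ^ (n - s) / real (b + 1)"
    using assms b by (intro divide_left_mono) auto
  also have "\<dots> \<le> covering_ratio q (n - s + 2 * b) b"
    using assms(1) by (intro covering_ratio_lower) simp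
  finally show ?thesis
    using assms kappaA_trade_image[of s n q] Min by simp
qed

lemma Min_kappaA_le:
  fixes q n s :: nat
  assumes "q \<ge> 3" "s \<le> n" "even s"
  defines "D \<equiv> (n - s) - (q - 2) * (s div 2)"
  shows "Min ((\<lambda>b. kappaA q n (s - 2 * b) b) ` {0..s div 2}) \<le> real (n + 1) * (real q - 1) ^ (n - s) * real q ^ D"
proof -
  obtain t where s: "s = 2 * t"
    using assms(3) by blast
  define m where "m = n - s"
  have Min_le: "Min ((\<lambda>b. kappaA q n (s - 2 * b) b) ` {0..s div 2}) \<le> covering_ratio q (m + 2 * b) b"
    if "b \<le> t" for b
    using Min_kappaA_le_covering_ratio[of q s n b] that assms(1,2) s unfolding m_def by simp
  have r: "0 \<le> (real q - 1) ^ m" "1 \<le> real q ^ D"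
    using assms(1) by auto
  \<comment> \<open>take b = m div (q - 2) if admissible; otherwise b = s/2, paying the factor q^D\<close>
  show ?thesis
  proof (cases "m div (q - 2) \<le> t")
    case True
    define b where "b = m div (q - 2)"
    have "(q - 2) * b \<le> m + 1"
      using times_div_less_eq_dividend[of "q - 2" m] unfolding b_def by linarith
    moreover have "m \<le> (q - 2) * Suc b + 1"
      using dividend_less_times_div[of "q - 2" m] assms(1) unfolding b_def by simp
    ultimately have "covering_ratio q (m + 2 * b) b \<le> real (m + 2 * b + 1) * (real q - 1) ^ m"
      by (rule covering_ratio_upper[OF assms(1)])
    also have "\<dots> \<le> (n + 1) * (real q - 1) ^ m"
      using True s assms(2) r unfolding b_def m_def by (intro mult_right_mono) auto
    also have "\<dots> \<le> (n + 1) * (real q - 1) ^ m * real q ^ D"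
      using mult_left_mono[OF r(2), of "(n + 1) * (real q - 1) ^ m"] r(1) by simp
    finally show ?thesis
      using Min_le[of b] True unfolding b_def m_def by linarith
  next
    case False
    define m' where "m' = (q - 2) * t"
    have "m' \<le> (q - 2) * (m div (q - 2))"
      using False unfolding m'_def by (intro mult_le_mono2) simp
    then have "m' \<le> m"
      using times_div_less_eq_dividend[of "q - 2" m] by (rule order_trans)
    moreover have "D = m - m'"
      unfolding D_def m_def m'_def s by simp
    ultimately have m': "m' \<le> m" "m = m' + D"
      by simp_all
    have "covering_ratio q (m' + D + 2 * t) t \<le> real q ^ D * covering_ratio q (m' + 2 * t) t"
      using covering_ratio_add_le[of q "m' + 2 * t" D t] assms(1) by (simp add: algebra_simps)
    also have "\<dots> \<le> real q ^ D * (real (m' + 2 * t + 1) * (real q - 1) ^ m')"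
      using covering_ratio_upper[of q t m'] assms(1) unfolding m'_def by (intro mult_left_mono) auto
    also have "\<dots> \<le> real q ^ D * ((n + 1) * (real q - 1) ^ m)"
      using m' s assms unfolding m_def by (intro mult_left_mono mult_mono power_increasing) auto
    finally show ?thesis
      using Min_le[of t] m' by (simp add: algebra_simps m_def)
  qed
qed

lemma ln_Min_kappaA_ge:
  fixes q n s :: nat
  assumes "q \<ge> 3" "s \<le> n"
  shows "real (n - s) * ln (real q - 1) - ln (real n + 1)
           \<le> ln (Min ((\<lambda>b. kappaA q n (s - 2 * b) b) ` {0..s div 2}))"
proof -
  have "real (n - s) * ln (real q - 1) - ln (real n + 1) = ln ((real q - 1) ^ (n - s) / real (n + 1))"
    using assms(1) by (simp add: ln_div ln_realpow add.commute)
  also have "\<dots> \<le> ln (Min ((\<lambda>b. kappaA q n (s - 2 * b) b) ` {0..s div 2}))"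
    using Min_kappaA_ge[OF assms] assms(1) by (intro ln_mono) auto
  finally show ?thesis .
qed

lemma ln_Min_kappaA_le:
  fixes q n s :: nat
  assumes "q \<ge> 3" "s \<le> n" "even s"
  shows "ln (Min ((\<lambda>b. kappaA q n (s - 2 * b) b) ` {0..s div 2}))
           \<le> ln (real n + 1) + real (n - s) * ln (real q - 1)
             + real ((n - s) - (q - 2) * (s div 2)) * ln (real q)"
proof -
  let ?M = "Min ((\<lambda>b. kappaA q n (s - 2 * b) b) ` {0..s div 2})"
  have "0 < (real q - 1) ^ (n - s) / real (n + 1)"
    using assms(1) by simp
  then have "ln ?M \<le> ln (real (n + 1) * (real q - 1) ^ (n - s) * real q ^ ((n - s) - (q - 2) * (s div 2)))"
    using Min_kappaA_ge[OF assms(1,2)] Min_kappaA_le[OF assms] by (intro ln_mono) auto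
  also have "\<dots> = ln (real n + 1) + real (n - s) * ln (real q - 1)
                   + real ((n - s) - (q - 2) * (s div 2)) * ln (real q)"
    using assms(1) by (simp add: ln_mult ln_realpow add.commute)
  finally show ?thesis .
qed

lemma surplus_over_n_tendsto_0:
  fixes q :: nat and s :: "nat \<Rightarrow> nat"
  assumes "q \<ge> 2" "2 / real q \<le> \<delta>" "\<And>n. even (s n)" "\<And>n. s n \<le> n"
    and "(\<lambda>n. real (s n) / real n) \<longlonglongrightarrow> \<delta>"
  shows "(\<lambda>n. real ((n - s n) - (q - 2) * (s n div 2)) / real n) \<longlonglongrightarrow> 0"
proof (rule tendsto_sandwich)
  show "\<forall>\<^sub>F n in sequentially. 0 \<le> real ((n - s n) - (q - 2) * (s n div 2)) / real n"
    by simp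
  show "\<forall>\<^sub>F n in sequentially.
      real ((n - s n) - (q - 2) * (s n div 2)) / real n \<le> max 0 (1 - real q / 2 * (real (s n) / real n))"
    using eventually_gt_at_top[of 0]
  proof eventually_elim
    case (elim n)
    obtain t where t: "s n = 2 * t"
      using assms(3) by blast
    have "(n - s n) - (q - 2) * (s n div 2) = n - q * t"
      using t assms(1) assms(4)[of n] by (simp add: algebra_simps)
    moreover have "real (n - q * t) \<le> max 0 (real n - real q * real t)"
      by (cases "q * t \<le> n") (auto simp: of_nat_diff)
    ultimately have "real ((n - s n) - (q - 2) * (s n div 2)) \<le> max 0 (real n - real q * real t)"
      by simp
    then have "real ((n - s n) - (q - 2) * (s n div 2)) / real n \<le> max 0 (real n - real q * real t) / real n"
      by (intro divide_right_mono) auto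
    also have "\<dots> = max 0 (1 - real q / 2 * (real (s n) / real n))"
      using elim t by (auto simp: max_def divide_simps algebra_simps)
    finally show ?case .
  qed
  have "(\<lambda>n. max 0 (1 - real q / 2 * (real (s n) / real n))) \<longlonglongrightarrow> max 0 (1 - real q / 2 * \<delta>)"
    by (intro tendsto_intros assms(5))
  moreover have "max 0 (1 - real q / 2 * \<delta>) = 0"
    using assms(1,2) by (auto simp: max_def divide_simps algebra_simps)
  ultimately show "(\<lambda>n. max 0 (1 - real q / 2 * (real (s n) / real n))) \<longlonglongrightarrow> 0"
    by simp
qed simp

lemma diff_over_n_tendsto:
  fixes s :: "nat \<Rightarrow> nat"
  assumes "\<And>n. s n \<le> n" "(\<lambda>n. real (s n) / real n) \<longlonglongrightarrow> \<delta>"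
  shows "(\<lambda>n. real (n - s n) / real n) \<longlonglongrightarrow> 1 - \<delta>"
proof (rule Lim_transform_eventually)
  show "(\<lambda>n. 1 - real (s n) / real n) \<longlonglongrightarrow> 1 - \<delta>"
    by (intro tendsto_intros assms(2))
  show "\<forall>\<^sub>F n in sequentially. 1 - real (s n) / real n = real (n - s n) / real n"
    using eventually_gt_at_top[of 0] by eventually_elim (use assms(1) in \<open>simp add: of_nat_diff divide_simps\<close>)
qed

lemma Min_kappaA_ln_rate:
  fixes q :: nat and s :: "nat \<Rightarrow> nat"
  assumes q: "q \<ge> 3" and "2 / real q \<le> \<delta>" and even: "\<And>n. even (s n)" and sn: "\<And>n. s n \<le> n"
    and lim: "(\<lambda>n. real (s n) / real n) \<longlonglongrightarrow> \<delta>"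
  shows "(\<lambda>n. ln (Min ((\<lambda>b. kappaA q n (s n - 2 * b) b) ` {0..s n div 2})) / real n)
           \<longlonglongrightarrow> (1 - \<delta>) * ln (real q - 1)"
proof -
  define M where "M n = Min ((\<lambda>b. kappaA q n (s n - 2 * b) b) ` {0..s n div 2})" for n
  define r where "r = ln (real q - 1)"
  define lo where "lo n = real (n - s n) / real n * r - ln (real n + 1) / real n" for n
  define hi where "hi n = ln (real n + 1) / real n + real (n - s n) / real n * r
                    + real ((n - s n) - (q - 2) * (s n div 2)) / real n * ln (real q)" for n
  have lower: "lo n \<le> ln (M n) / real n" for n
  proof -
    have "lo n = (real (n - s n) * r - ln (real n + 1)) / real n"
      unfolding lo_def by (simp add: diff_divide_distrib)
    also have "\<dots> \<le> ln (M n) / real n"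
      using ln_Min_kappaA_ge[OF q sn[of n]] unfolding M_def r_def by (intro divide_right_mono) auto
    finally show ?thesis .
  qed
  have upper: "ln (M n) / real n \<le> hi n" for n
  proof -
    have "ln (M n) / real n \<le> (ln (real n + 1) + real (n - s n) * r
                                + real ((n - s n) - (q - 2) * (s n div 2)) * ln (real q)) / real n"
      using ln_Min_kappaA_le[OF q sn[of n] even[of n]] unfolding M_def r_def by (intro divide_right_mono) auto
    also have "\<dots> = hi n"
      unfolding hi_def by (simp add: add_divide_distrib)
    finally show ?thesis .
  qed
  have limits: "lo \<longlonglongrightarrow> (1 - \<delta>) * r" "hi \<longlonglongrightarrow> (1 - \<delta>) * r"
  proof -
    have log_n: "(\<lambda>n. ln (real n + 1) / real n) \<longlonglongrightarrow> 0"
      by real_asymp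
    note frac = diff_over_n_tendsto[OF sn lim]
    have "lo \<longlonglongrightarrow> (1 - \<delta>) * r - 0"
      unfolding lo_def by (intro tendsto_intros frac log_n)
    then show "lo \<longlonglongrightarrow> (1 - \<delta>) * r"
      by simp
    have "hi \<longlonglongrightarrow> 0 + (1 - \<delta>) * r + 0 * ln (real q)"
      unfolding hi_def using q
      by (intro tendsto_intros frac log_n surplus_over_n_tendsto_0[OF _ assms(2) even sn lim]) simp
    then show "hi \<longlonglongrightarrow> (1 - \<delta>) * r"
      by simp
  qed
  have "(\<lambda>n. ln (M n) / real n) \<longlonglongrightarrow> (1 - \<delta>) * r"
    using lower upper by (intro tendsto_sandwich[OF always_eventually always_eventually limits]) simp_all
  then show ?thesis
    unfolding M_def r_def .
qed

lemma Min_kappaA_log_rate: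
  fixes q :: nat and s :: "nat \<Rightarrow> nat"
  assumes "q \<ge> 3" "2 / real q \<le> \<delta>" "\<And>n. even (s n)" "\<And>n. s n \<le> n"
    and "(\<lambda>n. real (s n) / real n) \<longlonglongrightarrow> \<delta>" and "\<beta> > 0" "\<beta> \<noteq> 1"
  shows "(\<lambda>n. log \<beta> (Min ((\<lambda>b. kappaA q n (s n - 2 * b) b) ` {0..s n div 2})) / real n)
           \<longlonglongrightarrow> (1 - \<delta>) * log \<beta> (real q - 1)"
proof -
  have "(\<lambda>n. ln (Min ((\<lambda>b. kappaA q n (s n - 2 * b) b) ` {0..s n div 2})) / real n / ln \<beta>)
          \<longlonglongrightarrow> (1 - \<delta>) * ln (real q - 1) / ln \<beta>"
    using assms by (intro tendsto_divide Min_kappaA_ln_rate tendsto_const) auto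
  then show ?thesis
    by (simp add: log_def mult.commute)
qed

theorem theorem5:
  shows
  "(\<forall>q n s :: nat. q \<ge> 3 \<and> n \<ge> 1 \<and> s \<le> n - 1 \<and> even s \<longrightarrow>
      (q * s \<le> 2 * (n - 1) \<longrightarrow>
                  (\<forall>b\<le>s div 2. kappaA q n (s - 2 * (s div 2)) (s div 2) \<le> kappaA q n (s - 2 * b) b)) \<and>
      (q * s \<ge> 2 * (n - 1) \<longrightarrow>
         (n - 1 - s) div (q - 2) \<le> s div 2 \<and>
         (\<forall>b\<le>s div 2. kappaA q n (s - 2 * ((n - 1 - s) div (q - 2))) ((n - 1 - s) div (q - 2))
                         \<le> kappaA q n (s - 2 * b) b)))
   \<and>
   (\<forall>(q :: nat) (\<delta> :: real) (s :: nat \<Rightarrow> nat) (\<beta> :: real).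
      q \<ge> 3 \<and> 2 / real q \<le> \<delta> \<and> \<delta> \<le> 1 \<and>
      (\<forall>n. even (s n) \<and> s n \<le> n) \<and>
      ((\<lambda>n. real (s n) / real n) \<longlonglongrightarrow> \<delta>) \<and>
      \<beta> > 0 \<and> \<beta> \<noteq> 1
      \<longrightarrow>
      ((\<lambda>n. log \<beta> (Min ((\<lambda>b. kappaA q n (s n - 2 * b) b) ` {0..s n div 2})) / real n)
         \<longlonglongrightarrow> (1 - \<delta>) * log \<beta> (real q - 1)))"
proof (intro conjI allI impI)
  fix q n s b :: nat
  assume "q \<ge> 3 \<and> n \<ge> 1 \<and> s \<le> n - 1 \<and> even s" "q * s \<le> 2 * (n - 1)" "b \<le> s div 2"
  then show "kappaA q n (s - 2 * (s div 2)) (s div 2) \<le> kappaA q n (s - 2 * b) b"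
    by (intro kappaA_min_at_half) auto
next
  fix q n s :: nat
  assume "q \<ge> 3 \<and> n \<ge> 1 \<and> s \<le> n - 1 \<and> even s" "2 * (n - 1) \<le> q * s"
  then show "(n - 1 - s) div (q - 2) \<le> s div 2"
    by (intro threshold_div_le_half) auto
next
  fix q n s b :: nat
  assume "q \<ge> 3 \<and> n \<ge> 1 \<and> s \<le> n - 1 \<and> even s" "2 * (n - 1) \<le> q * s" "b \<le> s div 2"
  then show "kappaA q n (s - 2 * ((n - 1 - s) div (q - 2))) ((n - 1 - s) div (q - 2)) \<le> kappaA q n (s - 2 * b) b"
    by (intro kappaA_min_at_floor) auto
next
  fix q :: nat and \<delta> \<beta> :: real and s :: "nat \<Rightarrow> nat"
  assume "q \<ge> 3 \<and> 2 / real q \<le> \<delta> \<and> \<delta> \<le> 1 \<and> (\<forall>n. even (s n) \<and> s n \<le> n) \<and>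
      (\<lambda>n. real (s n) / real n) \<longlonglongrightarrow> \<delta> \<and> \<beta> > 0 \<and> \<beta> \<noteq> 1"
  then show "(\<lambda>n. log \<beta> (Min ((\<lambda>b. kappaA q n (s n - 2 * b) b) ` {0..s n div 2})) / real n)
      \<longlonglongrightarrow> (1 - \<delta>) * log \<beta> (real q - 1)"
    by (intro Min_kappaA_log_rate) auto
qed

end
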